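(* Let $G=(V,E)$ be a finite simple undirected graph, $G_0:=G$, and let $W_1,\dots,W_r$ be distinct subsets of $V$ such that for every $t\in\{1,\dots,r\}$, $W_t$ is a clique of $G_{t-1}$ with $|W_t|\ge2$ and $G_t:=G_{t-1}\mid W_t$. Let $W_{r+1}\subseteq V$ be a clique of $G_r$. For $t=r,r-1,\dots,1$ define recursively $P_t:=\{x\in STAB(G_{t-1})\mid x_{W_t}=0\}$ and \[ \lambda^B_t:=\max\Big\{x_{W_{r+1}}+\sum_{i=t+1}^r\lambda^B_i(x_{W_i}-1)\ \Big|\ x\in P_t\Big\}-1 . \] Then the inequality \[ x_{W_{r+1}}+\sum_{t=1}^r\lambda^B_t(x_{W_t}-1)\le 1 \] is valid for $STAB(G)$.
   Context: For a graph $G=(V,E)$, $\mathcal S(G)\subseteq\{0,1\}^V$ is the set of characteristic vectors of stable sets of $G$, and $STAB(G)=\mathrm{conv}\,\mathcal S(G)$. For $W\subseteq V$ and $x\in\mathbb R^V$, $x_W=\sum_{v\in W}x_v$. $N(v)$ is the neighborhood of $v$. The clique projection of a clique $W$ ($|W|\ge2$) of a graph $H=(V,E_H)$ is $H\mid W=(V,E_H\cup\{uv\notin E_H\mid u\ne v,\ W\subseteq N_H(u)\cup N_H(v)\})$. An inequality is valid for a set if every point of the set satisfies it. *)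

theory Defs
  imports Main "HOL-Library.Indicator_Function"
begin

definition simple_graph :: "'a set \<Rightarrow> 'a set set \<Rightarrow> bool" where
  "simple_graph V E \<longleftrightarrow> finite V \<and>
     (\<forall>e\<in>E. \<exists>u v. e = {u, v} \<and> u \<noteq> v \<and> u \<in> V \<and> v \<in> V)"

definition nbhd :: "'a set set \<Rightarrow> 'a \<Rightarrow> 'a set" where
  "nbhd E v = {u. {u, v} \<in> E}"

definition is_clique :: "'a set \<Rightarrow> 'a set set \<Rightarrow> 'a set \<Rightarrow> bool" where
  "is_clique V E W \<longleftrightarrow> W \<subseteq> V \<and> (\<forall>u\<in>W. \<forall>v\<in>W. u \<noteq> v \<longrightarrow> {u, v} \<in> E)"

definition is_stable :: "'a set \<Rightarrow> 'a set set \<Rightarrow> 'a set \<Rightarrow> bool" where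
  "is_stable V E S \<longleftrightarrow> S \<subseteq> V \<and> (\<forall>u\<in>S. \<forall>v\<in>S. {u, v} \<notin> E)"

definition clique_proj :: "'a set \<Rightarrow> 'a set set \<Rightarrow> 'a set \<Rightarrow> 'a set set" where
  "clique_proj V E W = E \<union> {{u, v} | u v. u \<in> V \<and> v \<in> V \<and> u \<noteq> v \<and> {u, v} \<notin> E \<and>
                                         W \<subseteq> nbhd E u \<union> nbhd E v}"

definition xsum :: "('a \<Rightarrow> real) \<Rightarrow> 'a set \<Rightarrow> real" where
  "xsum x W = (\<Sum>v\<in>W. x v)"

definition STAB :: "'a set \<Rightarrow> 'a set set \<Rightarrow> ('a \<Rightarrow> real) set" where
  "STAB V E = {x. \<exists>\<mu> :: 'a set \<Rightarrow> real.
      (\<forall>S. \<mu> S \<ge> 0) \<and> (\<Sum>S\<in>{S. is_stable V E S}. \<mu> S) = 1 \<and>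
      (\<forall>v. x v = (\<Sum>S\<in>{S. is_stable V E S}. \<mu> S * indicator S v))}"

primrec gseq :: "'a set \<Rightarrow> 'a set set \<Rightarrow> (nat \<Rightarrow> 'a set) \<Rightarrow> nat \<Rightarrow> 'a set set" where
  "gseq V E W 0 = E"
| "gseq V E W (Suc t) = clique_proj V (gseq V E W t) (W (Suc t))"

definition Ppoly :: "'a set \<Rightarrow> 'a set set \<Rightarrow> (nat \<Rightarrow> 'a set) \<Rightarrow> nat \<Rightarrow> ('a \<Rightarrow> real) set" where
  "Ppoly V E W t = {x \<in> STAB V (gseq V E W (t - 1)). xsum x (W t) = 0}"

(* lamvec V E W r k defines lambda^B_t for t = r, r-1, ..., r-k+1 (recursion downwards).
   The max is written as a Sup; it is attained (P_t is a nonempty polytope). *)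
primrec lamvec :: "'a set \<Rightarrow> 'a set set \<Rightarrow> (nat \<Rightarrow> 'a set) \<Rightarrow> nat \<Rightarrow> nat \<Rightarrow> nat \<Rightarrow> real" where
  "lamvec V E W r 0 = (\<lambda>i. 0)"
| "lamvec V E W r (Suc k) =
     (let t = r - k; L = lamvec V E W r k in
      L(t := (SUP x\<in>Ppoly V E W t.
                 xsum x (W (Suc r)) + (\<Sum>i\<in>{t+1..r}. L i * (xsum x (W i) - 1))) - 1))"

definition lamB :: "'a set \<Rightarrow> 'a set set \<Rightarrow> (nat \<Rightarrow> 'a set) \<Rightarrow> nat \<Rightarrow> nat \<Rightarrow> real" where
  "lamB V E W r t = lamvec V E W r r t"

end

theory Submission
  imports Defs
begin

text \<open>By downward induction on t, every stable set S of G_t satisfies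
  x(W_{r+1}) + \<Sum>_{i>t} \<lambda>_i (x(W_i) - 1) \<le> 1 at its characteristic vector x; for t = r this
  holds because W_{r+1} is a clique of G_r. A stable set S of G_{t-1} meets the clique W_t at
  most once. If it misses W_t, its characteristic vector lies in P_t, and the maximum over P_t
  that defines \<lambda>_t exactly compensates the new term -\<lambda>_t. If it meets W_t, the new term
  vanishes and S stays stable in G_t = G_{t-1} | W_t, since every added edge uv has
  W_t \<subseteq> N(u) \<union> N(v). At t = 0 the inequality holds on all stable sets of G, hence on
  their convex hull.\<close>

definition clique_form :: "'a set \<Rightarrow> (nat \<Rightarrow> real) \<Rightarrow> (nat \<Rightarrow> 'a set) \<Rightarrow> nat set \<Rightarrow> ('a \<Rightarrow> real) \<Rightarrow> real"
  where "clique_form A a W I x = xsum x A + (\<Sum>i\<in>I. a i * (xsum x (W i) - 1))"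

lemma lamvec_add_eq:
  assumes "r - k < i"
  shows "lamvec V E W r (k + j) i = lamvec V E W r k i"
  using assms by (induction j) (auto simp: Let_def)

lemma lamB_eq_SUP:
  assumes "1 \<le> t" "t \<le> r"
  shows "lamB V E W r t =
           (SUP x\<in>Ppoly V E W t. clique_form (W (Suc r)) (lamB V E W r) W {t+1..r} x) - 1"
proof -
  have lamB_t: "lamB V E W r t = lamvec V E W r (Suc (r - t)) t"
    using lamvec_add_eq[of r "Suc (r - t)" t V E W "t - 1"] assms by (simp add: lamB_def)
  have lamB_later: "lamvec V E W r (r - t) i = lamB V E W r i" if "i \<in> {t+1..r}" for i
    using lamvec_add_eq[of r "r - t" i V E W t] that assms by (simp add: lamB_def)
  have "r - (r - t) = t" using assms by simp
  then show ?thesis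
    unfolding lamB_t clique_form_def using lamB_later by (auto simp: Let_def intro!: SUP_cong sum.cong)
qed

lemma finite_stable_sets: "finite V \<Longrightarrow> finite {S. is_stable V E S}"
  unfolding is_stable_def by (rule finite_subset[of _ "Pow V"]) auto

lemma xsum_indicator: "finite A \<Longrightarrow> xsum (indicator S) A = real (card (A \<inter> S))"
  unfolding xsum_def using sum_mult_indicator[of A "\<lambda>_. 1::real" S] by simp

lemma indicator_in_STAB:
  assumes "finite V" "is_stable V E S"
  shows "indicator S \<in> STAB V E"
  unfolding STAB_def
proof (intro CollectI exI[of _ "\<lambda>T. if T = S then 1 else 0"] conjI allI)
  show "(\<Sum>T\<in>{S. is_stable V E S}. if T = S then 1 else 0) = (1::real)"
    using assms finite_stable_sets[of V E] by (simp add: sum.delta)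
  fix v
  have "(\<Sum>T\<in>{S. is_stable V E S}. (if T = S then 1 else 0) * indicator T v) =
        (\<Sum>T\<in>{S. is_stable V E S}. if T = S then indicator S v else (0::real))"
    by (rule sum.cong) auto
  then show "(indicator S v::real) =
               (\<Sum>T\<in>{S. is_stable V E S}. (if T = S then 1 else 0) * indicator T v)"
    using assms finite_stable_sets[of V E] by (simp add: sum.delta)
qed auto

lemma clique_form_convex_combination:
  assumes "finite T" "sum \<mu> T = 1" "\<forall>v. x v = (\<Sum>S\<in>T. \<mu> S * indicator S v)"
  shows "clique_form A a W I x = (\<Sum>S\<in>T. \<mu> S * clique_form A a W I (indicator S))"
proof -
  have xsum_x: "xsum x B = (\<Sum>S\<in>T. \<mu> S * xsum (indicator S) B)" for B
    unfolding xsum_def using assms by (simp add: sum_distrib_left sum.swap[of _ B T])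
  have "(\<Sum>S\<in>T. \<mu> S * (\<Sum>i\<in>I. a i * (xsum (indicator S) (W i) - 1))) =
        (\<Sum>i\<in>I. a i * ((\<Sum>S\<in>T. \<mu> S * xsum (indicator S) (W i)) - (\<Sum>S\<in>T. \<mu> S)))"
    by (simp add: sum_distrib_left sum_subtractf right_diff_distrib sum.swap[of _ I T] algebra_simps)
  also have "\<dots> = (\<Sum>i\<in>I. a i * (xsum x (W i) - 1))"
    using xsum_x assms(2) by simp
  finally show ?thesis
    unfolding clique_form_def using xsum_x by (simp add: distrib_left sum.distrib)
qed

lemma clique_form_STAB_le:
  assumes "finite V" "x \<in> STAB V E"
    and "\<And>S. is_stable V E S \<Longrightarrow> clique_form A a W I (indicator S) \<le> c"
  shows "clique_form A a W I x \<le> c"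
proof -
  let ?T = "{S. is_stable V E S}"
  obtain \<mu> where \<mu>: "\<forall>S. \<mu> S \<ge> 0" "sum \<mu> ?T = 1" "\<forall>v. x v = (\<Sum>S\<in>?T. \<mu> S * indicator S v)"
    using assms(2) unfolding STAB_def by blast
  have "clique_form A a W I x = (\<Sum>S\<in>?T. \<mu> S * clique_form A a W I (indicator S))"
    using clique_form_convex_combination finite_stable_sets[OF assms(1)] \<mu>(2,3) by blast
  also have "\<dots> \<le> (\<Sum>S\<in>?T. \<mu> S * c)"
    by (intro sum_mono mult_left_mono) (use \<mu>(1) assms(3) in auto)
  also have "\<dots> = c"
    using \<mu>(2) by (simp add: sum_distrib_right[symmetric])
  finally show ?thesis .
qed

lemma bdd_above_clique_form_STAB:
  assumes "finite V"
  shows "bdd_above (clique_form A a W I ` STAB V E)"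
proof (rule bdd_aboveI2)
  let ?f = "\<lambda>S. \<bar>clique_form A a W I (indicator S)\<bar>"
  fix x assume "x \<in> STAB V E"
  then show "clique_form A a W I x \<le> sum ?f {S. is_stable V E S}"
  proof (rule clique_form_STAB_le[OF assms])
    fix S assume "is_stable V E S"
    then have "?f S \<le> sum ?f {S. is_stable V E S}"
      by (intro member_le_sum finite_stable_sets assms) auto
    then show "clique_form A a W I (indicator S) \<le> sum ?f {S. is_stable V E S}"
      by linarith
  qed
qed

lemma card_clique_Int_stable_le_1:
  assumes "is_clique V E W" "is_stable V E S" "finite W"
  shows "card (W \<inter> S) \<le> 1"
proof -
  have "\<forall>u\<in>W \<inter> S. \<forall>v\<in>W \<inter> S. u = v"
    using assms unfolding is_clique_def is_stable_def by blast
  then show ?thesis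
    using card_le_Suc0_iff_eq[of "W \<inter> S"] assms(3) by simp
qed

lemma is_stable_clique_proj:
  assumes stable: "is_stable V E S" and "w \<in> W \<inter> S"
  shows "is_stable V (clique_proj V E W) S"
  unfolding is_stable_def
proof (intro conjI ballI)
  show "S \<subseteq> V" using stable unfolding is_stable_def by blast
  fix u v assume uv: "u \<in> S" "v \<in> S"
  have no_edge: "\<forall>a\<in>S. \<forall>b\<in>S. {a, b} \<notin> E" using stable unfolding is_stable_def by blast
  show "{u, v} \<notin> clique_proj V E W"
  proof
    assume "{u, v} \<in> clique_proj V E W"
    then obtain a b where ab: "{u, v} = {a, b}" "W \<subseteq> nbhd E a \<union> nbhd E b"
      using no_edge uv unfolding clique_proj_def by blast
    then have "a \<in> S" "b \<in> S" using uv by (auto simp: doubleton_eq_iff)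
    moreover have "w \<in> nbhd E a \<or> w \<in> nbhd E b" using ab \<open>w \<in> W \<inter> S\<close> by blast
    ultimately show False using no_edge \<open>w \<in> W \<inter> S\<close> unfolding nbhd_def by blast
  qed
qed

lemma clique_form_le_lamB:
  assumes "finite V" "1 \<le> t" "t \<le> r" "x \<in> Ppoly V E W t"
  shows "clique_form (W (Suc r)) (lamB V E W r) W {t+1..r} x \<le> lamB V E W r t + 1"
proof -
  have "bdd_above (clique_form (W (Suc r)) (lamB V E W r) W {t+1..r} ` Ppoly V E W t)"
    using bdd_above_clique_form_STAB[OF assms(1)] unfolding Ppoly_def
    by (rule bdd_above_mono) auto
  then show ?thesis
    using cSUP_upper[OF assms(4)] lamB_eq_SUP[OF assms(2,3), of V E W] by simp
qed

lemma clique_form_stable_le_1: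
  assumes "finite V"
    and cliques: "\<forall>t\<in>{1..r}. is_clique V (gseq V E W (t - 1)) (W t)"
    and last_clique: "is_clique V (gseq V E W r) (W (Suc r))"
    and "t \<le> r"
  shows "is_stable V (gseq V E W t) S \<Longrightarrow>
           clique_form (W (Suc r)) (lamB V E W r) W {t+1..r} (indicator S) \<le> 1"
  using \<open>t \<le> r\<close>
proof (induction t arbitrary: S rule: inc_induct)
  case base
  have "finite (W (Suc r))"
    using last_clique \<open>finite V\<close> finite_subset unfolding is_clique_def by blast
  then show ?case
    using card_clique_Int_stable_le_1[OF last_clique base] xsum_indicator[of "W (Suc r)" S]
    by (simp add: clique_form_def)
next
  case (step n)
  let ?F = "\<lambda>t. clique_form (W (Suc r)) (lamB V E W r) W {t+1..r} (indicator S)"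
  have "Suc n \<le> r" using step.hyps by simp
  have clique: "is_clique V (gseq V E W n) (W (Suc n))"
    using bspec[OF cliques, of "Suc n"] \<open>Suc n \<le> r\<close> by simp
  then have finite_W: "finite (W (Suc n))"
    using \<open>finite V\<close> finite_subset unfolding is_clique_def by blast
  have "{n+1..r} = insert (Suc n) {Suc n+1..r}" using step.hyps by auto
  then have F_n: "?F n = ?F (Suc n) + lamB V E W r (Suc n) * (xsum (indicator S) (W (Suc n)) - 1)"
    by (simp add: clique_form_def)
  have "card (W (Suc n) \<inter> S) \<le> 1"
    using card_clique_Int_stable_le_1[OF clique step.prems finite_W] .
  then consider "card (W (Suc n) \<inter> S) = 0" | "card (W (Suc n) \<inter> S) = 1" by linarith
  then show ?case
  proof cases
    case 1
    then have "xsum (indicator S) (W (Suc n)) = 0"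
      using xsum_indicator[OF finite_W] by simp
    then have "indicator S \<in> Ppoly V E W (Suc n)"
      using indicator_in_STAB[OF \<open>finite V\<close> step.prems] by (simp add: Ppoly_def)
    then have "?F (Suc n) \<le> lamB V E W r (Suc n) + 1"
      using clique_form_le_lamB[OF \<open>finite V\<close> _ \<open>Suc n \<le> r\<close>] by simp
    then show ?thesis
      using F_n \<open>xsum _ _ = 0\<close> by simp
  next
    case 2
    then obtain w where "w \<in> W (Suc n) \<inter> S" by (metis card_1_singletonE insertI1)
    then have "is_stable V (gseq V E W (Suc n)) S"
      using is_stable_clique_proj[OF step.prems] by simp
    then show ?thesis
      using step.IH F_n 2 xsum_indicator[OF finite_W] by simp
  qed
qed

theorem lemma4:
  fixes V :: "'a set" and E :: "'a set set" and W :: "nat \<Rightarrow> 'a set" and r :: nat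
  assumes "simple_graph V E"
    and "inj_on W {1..r}"
    and "\<forall>t\<in>{1..r}. is_clique V (gseq V E W (t - 1)) (W t) \<and> card (W t) \<ge> 2"
    and "is_clique V (gseq V E W r) (W (Suc r))"
  shows "\<forall>x\<in>STAB V E.
           xsum x (W (Suc r)) + (\<Sum>t\<in>{1..r}. lamB V E W r t * (xsum x (W t) - 1)) \<le> 1"
proof
  fix x assume x: "x \<in> STAB V E"
  have "finite V" using assms(1) unfolding simple_graph_def by blast
  have "clique_form (W (Suc r)) (lamB V E W r) W {0+1..r} x \<le> 1"
  proof (rule clique_form_STAB_le[OF \<open>finite V\<close>, where E = "gseq V E W 0"])
    show "x \<in> STAB V (gseq V E W 0)" using x by simp
  qed (use clique_form_stable_le_1[OF \<open>finite V\<close> _ assms(4)] assms(3) in auto)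
  then show "xsum x (W (Suc r)) + (\<Sum>t\<in>{1..r}. lamB V E W r t * (xsum x (W t) - 1)) \<le> 1"
    by (simp add: clique_form_def)
qed

end
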